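(* Let $M$ be a module over a ring, and let $(\Delta_{\mathcal{I}})_{\mathcal{I}\subseteq\mathcal{P}(M)}$ be the distributed spaces of the spatial constraint system $(\mathcal{P}(M),\subseteq,(\delta_S)_{S\subseteq M})$ (whose agents are the subsets $S\subseteq M$). Then $\Delta_{\{A,B\}}=\delta_{A\cap B}$ for every $A,B\subseteq M$.
   Context: $\delta_S(X)=X\oplus S=\{x+s : x\in X, s\in S\}$ is the dilation by $S$; each $\delta_S$ is a space function on the complete lattice $(\mathcal{P}(M),\subseteq)$, i.e. preserves directed unions, binary unions and $\emptyset$. For a family of space functions $(s_i)_{i\in G}$ on a complete lattice, the distributed space of a group $I\subseteq G$ is $\Delta_I=\max\{f \text{ space function} : f(X)\subseteq s_i(X)\text{ for all } X \text{ and all } i\in I\}$ (this greatest element exists). Here $G=\mathcal{P}(M)$ and $s_S=\delta_S$. *)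

theory Defs
  imports Main
begin

definition directed_family :: "'a::lattice set \<Rightarrow> bool" where
  "directed_family D \<longleftrightarrow> D \<noteq> {} \<and> (\<forall>X\<in>D. \<forall>Y\<in>D. \<exists>Z\<in>D. sup X Y \<le> Z)"

definition space_function :: "('a::complete_lattice \<Rightarrow> 'a) \<Rightarrow> bool" where
  "space_function f \<longleftrightarrow>
     f bot = bot \<and>
     (\<forall>X Y. f (sup X Y) = sup (f X) (f Y)) \<and>
     (\<forall>D. directed_family D \<longrightarrow> f (Sup D) = Sup (f ` D))"

definition distributed_space ::
    "('g \<Rightarrow> 'a::complete_lattice \<Rightarrow> 'a) \<Rightarrow> 'g set \<Rightarrow> ('a \<Rightarrow> 'a)" where
  "distributed_space s I =
     (GREATEST f. space_function f \<and> (\<forall>i\<in>I. \<forall>X. f X \<le> s i X))"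

definition dilation :: "'m::ab_group_add set \<Rightarrow> 'm set \<Rightarrow> 'm set" where
  "dilation S X = {x + s | x s. x \<in> X \<and> s \<in> S}"

end

theory Submission
  imports Defs
begin

text \<open>On a powerset lattice a space function is determined by its values on singletons:
  preservation of binary joins and of the bottom gives this for finite sets, and every set is
  the directed union of its finite subsets. For dilations, \<open>dilation S {x}\<close> is the translate
  \<open>x + S\<close>, and translation is injective, so \<open>(x + A) \<inter> (x + B) = x + (A \<inter> B)\<close>. Hence any
  space function below both \<open>dilation A\<close> and \<open>dilation B\<close> lies below \<open>dilation (A \<inter> B)\<close>,
  which is itself a space function below both.\<close>

lemma directed_family_finite_subsets: "directed_family {F. finite F \<and> F \<subseteq> X}"
  unfolding directed_family_def
proof (intro conjI ballI)
  fix F G assume "F \<in> {F. finite F \<and> F \<subseteq> X}" "G \<in> {F. finite F \<and> F \<subseteq> X}"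
  then show "\<exists>Z\<in>{F. finite F \<and> F \<subseteq> X}. sup F G \<le> Z"
    by (intro bexI[of _ "F \<union> G"]) auto
qed blast

lemma space_function_finite_eq_UN:
  assumes "space_function (f :: 'a set \<Rightarrow> 'a set)" and "finite F"
  shows "f F = (\<Union>x\<in>F. f {x})"
  using assms(2)
proof (induction F rule: finite_induct)
  case empty
  then show ?case using assms(1) unfolding space_function_def by simp
next
  case (insert x F)
  have "f (insert x F) = f ({x} \<union> F)" by simp
  also have "\<dots> = f {x} \<union> f F" using assms(1) unfolding space_function_def by blast
  finally show ?case using insert.IH by simp
qed

lemma space_function_eq_UN:
  assumes f: "space_function (f :: 'a set \<Rightarrow> 'a set)"
  shows "f X = (\<Union>x\<in>X. f {x})"
proof -
  let ?D = "{F. finite F \<and> F \<subseteq> X}"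
  have "f (\<Union>?D) = (\<Union>F\<in>?D. f F)"
    using f directed_family_finite_subsets unfolding space_function_def by blast
  moreover have "\<Union>?D = X" by auto
  ultimately have "f X = (\<Union>F\<in>?D. f F)" by simp
  also have "\<dots> = (\<Union>F\<in>?D. \<Union>x\<in>F. f {x})"
    using space_function_finite_eq_UN[OF f] by (intro SUP_cong) blast+
  also have "\<dots> = (\<Union>x\<in>X. f {x})" by blast
  finally show ?thesis .
qed

lemma space_function_dilation: "space_function (dilation S)"
proof -
  have "dilation S (\<Union>D) = (\<Union>X\<in>D. dilation S X)" for D
    unfolding dilation_def by blast
  moreover have "dilation S (X \<union> Y) = dilation S X \<union> dilation S Y" for X Y
    unfolding dilation_def by blast
  ultimately show ?thesis unfolding space_function_def dilation_def by simp
qed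

lemma dilation_mono: "S \<subseteq> T \<Longrightarrow> dilation S X \<subseteq> dilation T X"
  unfolding dilation_def by blast

lemma dilation_singleton: "dilation S {x} = (+) x ` S"
  unfolding dilation_def by blast

lemma dilation_singleton_Int: "dilation A {x} \<inter> dilation B {x} = dilation (A \<inter> B) {x}"
  unfolding dilation_singleton by (simp add: image_Int)

theorem mainTheorem15:
  fixes A B :: "'m::ab_group_add set"
  shows "distributed_space dilation {A, B} = dilation (A \<inter> B)"
  unfolding distributed_space_def
proof (rule Greatest_equality)
  show "space_function (dilation (A \<inter> B)) \<and> (\<forall>i\<in>{A, B}. \<forall>X. dilation (A \<inter> B) X \<le> dilation i X)"
    using space_function_dilation dilation_mono by blast
next
  fix f :: "'m set \<Rightarrow> 'm set"
  assume "space_function f \<and> (\<forall>i\<in>{A, B}. \<forall>X. f X \<le> dilation i X)"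
  then have f: "space_function f" and below: "f X \<subseteq> dilation A X \<inter> dilation B X" for X
    by auto
  have below_Int: "f {x} \<subseteq> dilation (A \<inter> B) {x}" for x
    using below[of "{x}"] unfolding dilation_singleton_Int[symmetric] .
  have "f X \<subseteq> dilation (A \<inter> B) X" for X
  proof -
    have "f X = (\<Union>x\<in>X. f {x})" using space_function_eq_UN[OF f] .
    also have "\<dots> \<subseteq> (\<Union>x\<in>X. dilation (A \<inter> B) {x})"
      using below_Int by (rule UN_mono[OF order_refl])
    also have "\<dots> = dilation (A \<inter> B) X"
      by (rule space_function_eq_UN[OF space_function_dilation, symmetric])
    finally show ?thesis .
  qed
  then show "f \<le> dilation (A \<inter> B)" by (simp add: le_funI)
qed

end
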